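(* Let $X,X_1,X_2,\dots$ be i.i.d. real random variables with $EX=0$ and $E|X|^{2+\varepsilon}<\infty$ for some $\varepsilon>0$. Let $\mu>0$, $m\ge1$, $\delta\in(0,1/2]$ and $\alpha$ satisfy $2<\alpha\le(2+\varepsilon)(1-\delta)$, and assume $$\frac{6\cdot 2^{\alpha}}{(\alpha-1)(m+1)^{\alpha-1}\mu}\,E\big[(X^+)^{2+\varepsilon}\big]\le1.$$ Let $n_k=2^{k-1}$, $\bar G(t)=\int_t^\infty(1+s)^{-\alpha}ds$, $g(k)=\big(\bar G(m+\mu n_{k-1})-\bar G(m+\mu n_k)\big)/\bar G(m+\mu n_1)$ for $k\ge2$, and $$B_k=\bigcap_{j=1}^{n_k-1}\{X_j\le(\mu n_{k-1}+m)^{1-\delta}\}.$$ Then $$\frac{3P(B_k^c)}{g(k)}\le1\qquad\text{for all }k\ge2.$$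
   Context: $X^+=\max(X,0)$; $B_k^c$ is the complement of $B_k$. *)

theory Defs
  imports "HOL-Probability.Probability"
begin

definition nblk :: "nat \<Rightarrow> nat" where
  "nblk k = 2 ^ (k - 1)"

definition Gbar :: "real \<Rightarrow> real \<Rightarrow> real" where
  "Gbar \<alpha> t = (LBINT s:{t..}. (1 + s) powr (- \<alpha>))"

definition gfun :: "real \<Rightarrow> real \<Rightarrow> real \<Rightarrow> nat \<Rightarrow> real" where
  "gfun \<alpha> m \<mu> k =
     (Gbar \<alpha> (m + \<mu> * real (nblk (k - 1))) - Gbar \<alpha> (m + \<mu> * real (nblk k)))
     / Gbar \<alpha> (m + \<mu> * real (nblk 1))"

definition Bev :: "'a measure \<Rightarrow> (nat \<Rightarrow> 'a \<Rightarrow> real) \<Rightarrow> real \<Rightarrow> real \<Rightarrow> real \<Rightarrow> nat \<Rightarrow> 'a set" where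
  "Bev M X \<mu> m \<delta> k =
     {\<omega> \<in> space M. \<forall>j \<in> {1..nblk k - 1}.
        X j \<omega> \<le> (\<mu> * real (nblk (k - 1)) + m) powr (1 - \<delta>)}"

end

theory Submission
  imports Defs
begin

(*
  The complement of B_k is a union of at most n_k - 1 \<le> 2 n_(k-1) events X_j > t with
  t = (\<mu> n_(k-1) + m)^(1-\<delta>). Identical distribution, the union bound and Markov's inequality
  for (X+)^(2+\<epsilon>), together with \<alpha> \<le> (2+\<epsilon>)(1-\<delta>), give
  P(B_k^c) \<le> 2 n_(k-1) E[(X+)^(2+\<epsilon>)] / (\<mu> n_(k-1) + m)^\<alpha>.
  On the other side Gbar(t) = (1+t)^(1-\<alpha>) / (\<alpha>-1), so the numerator of g(k) is at least the
  interval length \<mu> n_(k-1) times the integrand at the right end point, which is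
  \<ge> (2(\<mu> n_(k-1) + m))^(-\<alpha>) because m \<ge> 1, while the denominator is at most
  (m+1)^(1-\<alpha>) / (\<alpha>-1). The moment condition is exactly what makes three times the first bound
  smaller than the second.
*)

lemma one_le_nblk: "1 \<le> nblk k"
  by (simp add: nblk_def)

lemma nblk_one: "nblk 1 = 1"
  by (simp add: nblk_def)

lemma nblk_le_double_pred: "nblk k \<le> 2 * nblk (k - 1)"
  by (cases "k \<le> 1") (auto simp: nblk_def power_Suc[symmetric] simp del: power_Suc)

lemma nblk_eq_double_pred: "k \<ge> 2 \<Longrightarrow> nblk k = 2 * nblk (k - 1)"
  by (auto simp: nblk_def numeral_2_eq_2 dest!: le_Suc_ex)

lemma has_integral_shifted_powr_to_inf:
  fixes a t :: real
  assumes "a > 1" "t > -1"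
  shows "((\<lambda>s. (1 + s) powr (- a)) has_integral (1 + t) powr (1 - a) / (a - 1)) {t..}"
proof (intro has_integral_to_inf integrable_continuous_interval continuous_intros)
  define F where "F \<equiv> \<lambda>x::real. (1 + x) powr (1 - a) / (1 - a)"
  have "((\<lambda>x. (1 + x) powr (- a)) has_integral (F y - F t)) {t..y}" if "y \<ge> t" for y
    unfolding F_def using assms
    by (intro fundamental_theorem_of_calculus that)
       (auto intro!: derivative_eq_intros
               simp flip: has_real_derivative_iff_has_vector_derivative)
  then have "\<forall>\<^sub>F y in at_top. integral {t..y} (\<lambda>x. (1 + x) powr (- a)) = F y - F t"
    by (meson eventually_at_top_linorderI integral_unique)
  moreover have "((\<lambda>y. (1 + y) powr (1 - a)) \<longlongrightarrow> 0) at_top"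
    using assms by (intro tendsto_neg_powr filterlim_tendsto_add_at_top[OF tendsto_const filterlim_ident]) auto
  then have "((\<lambda>y. F y - F t) \<longlongrightarrow> 0 / (1 - a) - F t) at_top"
    unfolding F_def using assms by (intro tendsto_intros) auto
  moreover have "0 / (1 - a) - F t = (1 + t) powr (1 - a) / (a - 1)"
    by (simp add: F_def minus_divide_right)
  ultimately show "((\<lambda>y. integral {t..y} (\<lambda>x. (1 + x) powr (- a)))
      \<longlongrightarrow> (1 + t) powr (1 - a) / (a - 1)) at_top"
    by (simp add: filterlim_cong)
qed (use assms in auto)

lemma Gbar_eq:
  fixes a t :: real
  assumes "a > 1" "t > -1"
  shows "Gbar a t = (1 + t) powr (1 - a) / (a - 1)"
proof -
  note integral = has_integral_shifted_powr_to_inf[OF assms]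
  then have "(\<lambda>s. (1 + s) powr (- a)) absolutely_integrable_on {t..}"
    by (intro nonnegative_absolutely_integrable_1) auto
  then have "set_integrable lborel {t..} (\<lambda>s. (1 + s) powr (- a))"
    unfolding set_integrable_def by (subst (asm) integrable_completion) auto
  from set_borel_integral_eq_integral(2)[OF this] show ?thesis
    unfolding Gbar_def using integral_unique[OF integral] by simp
qed

lemma powr_diff_ge_mean_value:
  fixes a b p :: real
  assumes "0 < a" "a \<le> b" "p > 1"
  shows "(p - 1) * (b - a) * b powr (- p) \<le> a powr (1 - p) - b powr (1 - p)"
proof (cases "a = b")
  case False
  then have "a < b" using assms by simp
  have deriv: "DERIV (\<lambda>x. x powr (1 - p)) x :> (1 - p) * x powr (1 - p - 1)"
    if "a \<le> x" "x \<le> b" for x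
    using assms that by (auto intro!: derivative_eq_intros)
  from MVT2[OF \<open>a < b\<close> deriv] obtain z where z: "a < z" "z < b"
    "b powr (1 - p) - a powr (1 - p) = (b - a) * ((1 - p) * z powr (1 - p - 1))"
    by blast
  have "(p - 1) * (b - a) * b powr (- p) \<le> (p - 1) * (b - a) * z powr (- p)"
    using z assms by (intro mult_left_mono powr_mono2') auto
  also have "\<dots> = a powr (1 - p) - b powr (1 - p)"
    using z by (simp add: algebra_simps)
  finally show ?thesis .
qed simp

lemma Gbar_diff_ge:
  fixes a s t :: real
  assumes "a > 1" "s > -1" "s \<le> t"
  shows "(t - s) * (1 + t) powr (- a) \<le> Gbar a s - Gbar a t"
proof -
  have "(a - 1) * ((1 + t) - (1 + s)) * (1 + t) powr (- a)
      \<le> (1 + s) powr (1 - a) - (1 + t) powr (1 - a)"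
    using assms by (intro powr_diff_ge_mean_value) auto
  then show ?thesis
    using assms by (simp add: Gbar_eq field_simps diff_divide_distrib[symmetric])
qed

lemma gfun_ge:
  fixes a m \<mu> :: real
  assumes "a > 1" "\<mu> > 0" "m \<ge> 1" "k \<ge> 2"
  shows "(a - 1) * \<mu> * nblk (k - 1) * (m + 1) powr (a - 1)
           / (2 powr a * (\<mu> * nblk (k - 1) + m) powr a) \<le> gfun a m \<mu> k"
proof -
  define n where "n = real (nblk (k - 1))"
  define A where "A = \<mu> * n + m"
  have n: "n \<ge> 1" using one_le_nblk[of "k - 1"] by (simp add: n_def)
  then have "\<mu> * n > 0" using assms by simp
  then have "A \<ge> 1" using assms by (simp add: A_def)
  have "\<mu> * n * (2 * A) powr (- a) \<le> \<mu> * n * (1 + (m + 2 * \<mu> * n)) powr (- a)"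
    using assms \<open>\<mu> * n > 0\<close> by (intro mult_left_mono powr_mono2') (auto simp: A_def)
  also have "\<dots> \<le> Gbar a (m + \<mu> * n) - Gbar a (m + 2 * \<mu> * n)"
    using Gbar_diff_ge[of a "m + \<mu> * n" "m + 2 * \<mu> * n"] assms n by simp
  finally have numerator: "\<mu> * n / (2 powr a * A powr a)
      \<le> Gbar a (m + \<mu> * n) - Gbar a (m + 2 * \<mu> * n)"
    using \<open>A \<ge> 1\<close> by (simp add: powr_minus powr_mult divide_simps)
  have "Gbar a (m + \<mu>) \<le> (1 + m) powr (1 - a) / (a - 1)"
    using assms by (auto simp: Gbar_eq intro!: divide_right_mono powr_mono2')
  also have "\<dots> = 1 / ((a - 1) * (m + 1) powr (a - 1))"
    using assms by (simp add: powr_diff add.commute field_simps)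
  finally have denominator: "0 < Gbar a (m + \<mu>)" "Gbar a (m + \<mu>) \<le> 1 / ((a - 1) * (m + 1) powr (a - 1))"
    using assms by (simp_all add: Gbar_eq)
  have "(a - 1) * \<mu> * n * (m + 1) powr (a - 1) / (2 powr a * A powr a)
      = (\<mu> * n / (2 powr a * A powr a)) / (1 / ((a - 1) * (m + 1) powr (a - 1)))"
    by simp
  also have "\<dots> \<le> (Gbar a (m + \<mu> * n) - Gbar a (m + 2 * \<mu> * n)) / Gbar a (m + \<mu>)"
    using numerator denominator \<open>\<mu> * n > 0\<close> \<open>A \<ge> 1\<close>
    by (intro frac_le; smt (verit) divide_pos_pos powr_gt_zero mult_pos_pos)
  also have "\<dots> = gfun a m \<mu> k"
    unfolding gfun_def nblk_one nblk_eq_double_pred[OF \<open>k \<ge> 2\<close>] n_def by (simp add: mult_ac)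
  finally show ?thesis by (simp add: n_def A_def)
qed

lemma integrable_positive_part_powr:
  fixes Y :: "'a \<Rightarrow> real"
  assumes "integrable M (\<lambda>\<omega>. \<bar>Y \<omega>\<bar> powr p)" "Y \<in> borel_measurable M" "p \<ge> 0"
  shows "integrable M (\<lambda>\<omega>. max (Y \<omega>) 0 powr p)"
  using assms by (intro Bochner_Integration.integrable_bound[OF assms(1)])
    (auto intro!: AE_I2 powr_mono2)

lemma measure_vimage_eq_of_distr_eq:
  assumes "X \<in> borel_measurable M" "Y \<in> borel_measurable M"
    and "distr M borel X = distr M borel Y" "B \<in> sets borel"
  shows "measure M (X -` B \<inter> space M) = measure M (Y -` B \<inter> space M)"
  using assms by (metis measure_distr)

lemma (in finite_measure) measure_gt_le_positive_part_moment:
  fixes Y :: "'a \<Rightarrow> real"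
  assumes [measurable]: "Y \<in> borel_measurable M"
    and "integrable M (\<lambda>\<omega>. max (Y \<omega>) 0 powr p)" "p > 0" "t > 0"
  shows "measure M {\<omega>\<in>space M. t < Y \<omega>} \<le> (\<integral>\<omega>. max (Y \<omega>) 0 powr p \<partial>M) / t powr p"
proof -
  have "measure M {\<omega>\<in>space M. t < Y \<omega>}
      \<le> measure M {\<omega>\<in>space M. t powr p \<le> max (Y \<omega>) 0 powr p}"
    using assms by (intro finite_measure_mono) (auto intro!: powr_mono2)
  also have "\<dots> \<le> (\<integral>\<omega>. max (Y \<omega>) 0 powr p \<partial>M) / t powr p"
    using assms by (intro integral_Markov_inequality_measure[where A="space M"]) auto
  finally show ?thesis .
qed

lemma (in finite_measure) measure_UN_gt_le_positive_part_moment: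
  fixes X :: "nat \<Rightarrow> 'a \<Rightarrow> real"
  assumes [measurable]: "\<And>i. X i \<in> borel_measurable M"
    and ident: "\<And>i. distr M borel (X i) = distr M borel (X 0)"
    and moment: "integrable M (\<lambda>\<omega>. max (X 0 \<omega>) 0 powr p)"
    and "p > 0" "t > 0" "finite J"
  shows "measure M (\<Union>j\<in>J. {\<omega>\<in>space M. t < X j \<omega>})
           \<le> card J * (\<integral>\<omega>. max (X 0 \<omega>) 0 powr p \<partial>M) / t powr p"
proof -
  define q where "q = measure M {\<omega>\<in>space M. t < X 0 \<omega>}"
  have "X j -` {t<..} \<inter> space M = {\<omega>\<in>space M. t < X j \<omega>}" for j
    by auto
  then have same: "measure M {\<omega>\<in>space M. t < X j \<omega>} = q" for j
    using measure_vimage_eq_of_distr_eq[OF _ _ ident, of j "{t<..}"] by (simp add: q_def)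
  have "measure M (\<Union>j\<in>J. {\<omega>\<in>space M. t < X j \<omega>})
      \<le> (\<Sum>j\<in>J. measure M {\<omega>\<in>space M. t < X j \<omega>})"
    using \<open>finite J\<close> by (rule measure_UNION_le) measurable
  also have "\<dots> = card J * q"
    by (simp add: same)
  also have "\<dots> \<le> card J * ((\<integral>\<omega>. max (X 0 \<omega>) 0 powr p \<partial>M) / t powr p)"
    unfolding q_def using moment \<open>p > 0\<close> \<open>t > 0\<close>
    by (intro mult_left_mono measure_gt_le_positive_part_moment) auto
  finally show ?thesis by simp
qed

lemma (in finite_measure) measure_compl_Bev_le:
  fixes X :: "nat \<Rightarrow> 'a \<Rightarrow> real" and p \<mu> m \<delta> a :: real
  assumes rv: "\<And>i. X i \<in> borel_measurable M"
    and ident: "\<And>i. distr M borel (X i) = distr M borel (X 0)"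
    and moment: "integrable M (\<lambda>\<omega>. max (X 0 \<omega>) 0 powr p)" and "p > 0"
    and "\<mu> \<ge> 0" "m \<ge> 1" and exponent: "a \<le> p * (1 - \<delta>)"
  shows "measure M (space M - Bev M X \<mu> m \<delta> k)
           \<le> 2 * nblk (k - 1) * (\<integral>\<omega>. max (X 0 \<omega>) 0 powr p \<partial>M)
               / (\<mu> * nblk (k - 1) + m) powr a"
proof -
  define E where "E = (\<integral>\<omega>. max (X 0 \<omega>) 0 powr p \<partial>M)"
  define A where "A = \<mu> * nblk (k - 1) + m"
  define t where "t = A powr (1 - \<delta>)"
  have "A \<ge> 1" using \<open>\<mu> \<ge> 0\<close> \<open>m \<ge> 1\<close> by (simp add: A_def add_increasing)
  then have "t > 0" by (simp add: t_def)
  have "E \<ge> 0" unfolding E_def by (intro integral_nonneg_AE) auto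
  have "A powr a \<le> t powr p"
    using \<open>A \<ge> 1\<close> exponent by (auto simp: t_def powr_powr mult.commute intro!: powr_mono)
  have "space M - Bev M X \<mu> m \<delta> k = (\<Union>j\<in>{1..nblk k - 1}. {\<omega>\<in>space M. t < X j \<omega>})"
    by (auto simp: Bev_def t_def A_def not_le mult.commute)
  also have "measure M \<dots> \<le> card {1..nblk k - 1} * E / t powr p"
    unfolding E_def using \<open>p > 0\<close> \<open>t > 0\<close>
    by (intro measure_UN_gt_le_positive_part_moment[of X, OF rv ident moment]) auto
  also have "\<dots> \<le> 2 * nblk (k - 1) * E / A powr a"
    using \<open>E \<ge> 0\<close> \<open>A \<ge> 1\<close> \<open>t > 0\<close> \<open>A powr a \<le> t powr p\<close> nblk_le_double_pred[of k]
    by (intro frac_le mult_right_mono) auto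
  finally show ?thesis by (simp add: E_def A_def)
qed

theorem lemma3:
  fixes M :: "'a measure" and X :: "nat \<Rightarrow> 'a \<Rightarrow> real"
    and \<epsilon> \<mu> m \<delta> \<alpha> :: real
  assumes P: "prob_space M"
    and rv: "\<And>i. X i \<in> borel_measurable M"
    and indep: "prob_space.indep_vars M (\<lambda>_. borel) X UNIV"
    and ident: "\<And>i. distr M borel (X i) = distr M borel (X 0)"
    and eps: "\<epsilon> > 0"
    and mom: "integrable M (\<lambda>\<omega>. \<bar>X 0 \<omega>\<bar> powr (2 + \<epsilon>))"
    and int: "integrable M (X 0)"
    and mean: "(\<integral>\<omega>. X 0 \<omega> \<partial>M) = 0"
    and mu: "\<mu> > 0" and m: "m \<ge> 1"
    and delta: "0 < \<delta>" "\<delta> \<le> 1/2"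
    and alpha: "2 < \<alpha>" "\<alpha> \<le> (2 + \<epsilon>) * (1 - \<delta>)"
    and cond: "6 * 2 powr \<alpha> / ((\<alpha> - 1) * (m + 1) powr (\<alpha> - 1) * \<mu>)
                 * (\<integral>\<omega>. (max (X 0 \<omega>) 0) powr (2 + \<epsilon>) \<partial>M) \<le> 1"
  shows "\<forall>k\<ge>2. 3 * measure M (space M - Bev M X \<mu> m \<delta> k) / gfun \<alpha> m \<mu> k \<le> 1"
proof (intro allI impI)
  fix k :: nat
  assume "k \<ge> 2"
  interpret prob_space M by (rule P)
  define n where "n = real (nblk (k - 1))"
  define A where "A = \<mu> * n + m"
  define E where "E = (\<integral>\<omega>. max (X 0 \<omega>) 0 powr (2 + \<epsilon>) \<partial>M)"
  define C where "C = (\<alpha> - 1) * (m + 1) powr (\<alpha> - 1) * \<mu>"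
  have "n \<ge> 1" "C > 0" "A > 0"
    using one_le_nblk[of "k - 1"] alpha mu m by (auto simp: n_def C_def A_def add_pos_nonneg)
  have "integrable M (\<lambda>\<omega>. max (X 0 \<omega>) 0 powr (2 + \<epsilon>))"
    using mom rv eps by (intro integrable_positive_part_powr) auto
  from measure_compl_Bev_le[of X, OF rv ident this]
  have tail: "measure M (space M - Bev M X \<mu> m \<delta> k) \<le> 2 * n * E / A powr \<alpha>"
    using eps mu m alpha unfolding n_def A_def E_def by simp
  have moment: "6 * E \<le> C / 2 powr \<alpha>"
    using cond \<open>C > 0\<close> unfolding C_def E_def by (simp add: divide_le_eq le_divide_eq mult_ac)
  have lower: "C * n / (2 powr \<alpha> * A powr \<alpha>) \<le> gfun \<alpha> m \<mu> k"
    using gfun_ge[of \<alpha> \<mu> m k] alpha mu m \<open>k \<ge> 2\<close> by (simp add: n_def A_def C_def ac_simps)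
  moreover have "C * n / (2 powr \<alpha> * A powr \<alpha>) > 0"
    using \<open>C > 0\<close> \<open>n \<ge> 1\<close> \<open>A > 0\<close> by simp
  ultimately have "gfun \<alpha> m \<mu> k > 0" by linarith
  have "3 * measure M (space M - Bev M X \<mu> m \<delta> k) \<le> n * (6 * E) / A powr \<alpha>"
    using mult_left_mono[OF tail, of 3] by (simp add: ac_simps)
  also have "\<dots> \<le> n * (C / 2 powr \<alpha>) / A powr \<alpha>"
    using moment \<open>n \<ge> 1\<close> \<open>A > 0\<close> by (intro divide_right_mono mult_left_mono) auto
  also have "\<dots> = C * n / (2 powr \<alpha> * A powr \<alpha>)"
    by (simp add: ac_simps)
  finally show "3 * measure M (space M - Bev M X \<mu> m \<delta> k) / gfun \<alpha> m \<mu> k \<le> 1"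
    using lower \<open>gfun \<alpha> m \<mu> k > 0\<close> by simp
qed

end
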